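(* Let $R$ be a commutative ring. The flat topology and the Zariski topology on $\mathrm{Spec}(R)$ coincide if and only if every prime ideal of $R$ is maximal.
   Context: The flat topology on $\mathrm{Spec}(R)$ is the topology having as a basis of open sets the sets $V(I)=\{\mathfrak p\in\mathrm{Spec}(R):I\subseteq\mathfrak p\}$ with $I$ ranging over finitely generated ideals of $R$ (Hochster's inverse topology). *)

theory Defs
  imports "HOL-Analysis.Analysis" "HOL-Algebra.Ideal"
begin

definition Spec :: "('a, 'b) ring_scheme \<Rightarrow> 'a set set" where
  "Spec R = {P. primeideal P R}"

definition Vset :: "('a, 'b) ring_scheme \<Rightarrow> 'a set \<Rightarrow> 'a set set" where
  "Vset R I = {P \<in> Spec R. I \<subseteq> P}"

definition fin_gen_ideal :: "('a, 'b) ring_scheme \<Rightarrow> 'a set \<Rightarrow> bool" where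
  "fin_gen_ideal R I \<longleftrightarrow> ideal I R \<and> (\<exists>S. finite S \<and> S \<subseteq> carrier R \<and> I = Idl\<^bsub>R\<^esub> S)"

definition zariski_topology :: "('a, 'b) ring_scheme \<Rightarrow> 'a set topology" where
  "zariski_topology R = topology_generated_by {Spec R - Vset R I | I. ideal I R}"

definition flat_topology :: "('a, 'b) ring_scheme \<Rightarrow> 'a set topology" where
  "flat_topology R = topology_generated_by {Vset R I | I. fin_gen_ideal R I}"

end

theory Submission
  imports Defs "HOL-Algebra.Ring_Divisibility"
begin

text \<open>
  Zariski-open sets are closed under generalization, while a flat-open set \<open>V(f)\<close> contains
  every prime above \<open>f\<close>; so if some prime \<open>P\<close> lies strictly below a prime \<open>M\<close>, choosing
  \<open>f \<in> M - P\<close> gives a flat-open set that is not Zariski-open.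

  Conversely, suppose all primes are maximal. For \<open>P \<in> D(I)\<close> pick \<open>f \<in> I - P\<close>; as \<open>P\<close> is
  maximal, \<open>g + r f = 1\<close> with \<open>g \<in> P\<close>, and \<open>V(g)\<close> is a flat neighbourhood of \<open>P\<close> inside \<open>D(I)\<close>.
  For \<open>P \<in> V(a\<^sub>1, \<dots>, a\<^sub>n)\<close>, minimality of \<open>P\<close> makes each \<open>a\<^sub>i\<close> nilpotent in \<open>R\<^sub>P\<close>,
  i.e. \<open>t\<^sub>i a\<^sub>i\<^sup>k = 0\<close> with \<open>t\<^sub>i \<notin> P\<close>, and \<open>D(t\<^sub>1) \<inter> \<dots> \<inter> D(t\<^sub>n)\<close> is a Zariski neighbourhood
  of \<open>P\<close> inside \<open>V(a\<^sub>1, \<dots>, a\<^sub>n)\<close>.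
\<close>

lemma topology_generated_by_eqI:
  assumes "\<And>s. s \<in> \<A> \<Longrightarrow> openin (topology_generated_by \<B>) s"
    and "\<And>s. s \<in> \<B> \<Longrightarrow> openin (topology_generated_by \<A>) s"
  shows "topology_generated_by \<A> = topology_generated_by \<B>"
  unfolding topology_eq openin_topology_generated_by_iff
  using generate_topology_on_coarsest[OF istopology_generate_topology_on]
    assms[unfolded openin_topology_generated_by_iff] by metis

lemma (in ring) Vset_genideal:
  assumes "S \<subseteq> carrier R"
  shows "Vset R (Idl S) = {P \<in> Spec R. S \<subseteq> P}"
proof -
  have "Idl S \<subseteq> P \<longleftrightarrow> S \<subseteq> P" if "P \<in> Spec R" for P
    using genideal_self[OF assms] genideal_minimal[of P S] primeideal.axioms(1) that
    unfolding Spec_def by blast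
  then show ?thesis unfolding Vset_def by blast
qed

lemma (in ring) Vset_genideal_singleton:
  "a \<in> carrier R \<Longrightarrow> Vset R (Idl {a}) = {P \<in> Spec R. a \<in> P}"
  using Vset_genideal[of "{a}"] by simp

lemma (in ring) fin_gen_ideal_genideal:
  assumes "finite S" "S \<subseteq> carrier R"
  shows "fin_gen_ideal R (Idl S)"
  unfolding fin_gen_ideal_def using assms genideal_ideal by blast

lemma openin_zariski_topology_basic:
  "ideal I R \<Longrightarrow> openin (zariski_topology R) (Spec R - Vset R I)"
  unfolding zariski_topology_def by (intro topology_generated_by_Basis) blast

lemma openin_flat_topology_basic:
  "fin_gen_ideal R I \<Longrightarrow> openin (flat_topology R) (Vset R I)"
  unfolding flat_topology_def by (intro topology_generated_by_Basis) blast

lemma (in ring) topspace_zariski_topology: "topspace (zariski_topology R) = Spec R"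
proof -
  have "\<not> carrier R \<subseteq> P" if "primeideal P R" for P
    using primeideal.I_notcarr[OF that] ideal.Icarr[OF primeideal.axioms(1)[OF that]] by blast
  then have "Spec R = Spec R - Vset R (carrier R)"
    unfolding Vset_def Spec_def by blast
  then have "Spec R \<in> {Spec R - Vset R I | I. ideal I R}"
    using oneideal by blast
  then have "\<Union>{Spec R - Vset R I | I. ideal I R} = Spec R"
    by blast
  then show ?thesis
    unfolding zariski_topology_def topology_generated_by_topspace .
qed

lemma zariski_open_generalization:
  assumes "openin (zariski_topology R) U" "M \<in> U" "P \<in> Spec R" "P \<subseteq> M"
  shows "P \<in> U"
proof -
  have "generate_topology_on {Spec R - Vset R I | I. ideal I R} U"
    using assms(1) unfolding zariski_topology_def openin_topology_generated_by_iff .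
  then show ?thesis
    using assms(2)
    by (induction rule: generate_topology_on.induct) (use assms(3,4) in \<open>auto simp: Vset_def\<close>)
qed

lemma (in cring) ideal_add_cgenideal:
  assumes I: "ideal I R" and c: "c \<in> carrier R"
  shows "ideal (I <+> PIdl c) R" and "I \<subseteq> I <+> PIdl c" and "c \<in> I <+> PIdl c"
    and "x \<in> I <+> PIdl c \<longleftrightarrow> (\<exists>q\<in>I. \<exists>r\<in>carrier R. x = q \<oplus> r \<otimes> c)"
proof -
  show mem: "x \<in> I <+> PIdl c \<longleftrightarrow> (\<exists>q\<in>I. \<exists>r\<in>carrier R. x = q \<oplus> r \<otimes> c)" for x
    unfolding set_add_def' cgenideal_def by blast
  show "ideal (I <+> PIdl c) R"
    using I c by (intro add_ideals cgenideal_ideal)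
  have "q = q \<oplus> \<zero> \<otimes> c" if "q \<in> I" for q
    using that ideal.Icarr[OF I] c by simp
  then show "I \<subseteq> I <+> PIdl c"
    using mem by blast
  have "c = \<zero> \<oplus> \<one> \<otimes> c"
    using c by simp
  then show "c \<in> I <+> PIdl c"
    using mem additive_subgroup.zero_closed[OF ideal.axioms(1)[OF I]] by blast
qed

lemma (in cring) maximal_disjoint_ideal_is_prime:
  assumes T: "submonoid T R" and M: "ideal M R" "M \<inter> T = {}"
    and max: "\<And>J. ideal J R \<Longrightarrow> M \<subseteq> J \<Longrightarrow> J \<inter> T = {} \<Longrightarrow> J = M"
  shows "primeideal M R"
proof -
  have meets: "\<exists>t\<in>T. \<exists>q\<in>M. \<exists>r\<in>carrier R. t = q \<oplus> r \<otimes> c" if "c \<in> carrier R" "c \<notin> M" for c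
  proof -
    note J = ideal_add_cgenideal[OF M(1) that(1)]
    have "M <+> PIdl c \<noteq> M"
      using J(3) that(2) by blast
    then have "(M <+> PIdl c) \<inter> T \<noteq> {}"
      using max[OF J(1,2)] by blast
    then show ?thesis
      using J(4) by blast
  qed
  show ?thesis
  proof (rule primeidealI[OF M(1) is_cring])
    show "carrier R \<noteq> M"
      using M(2) submonoid.one_closed[OF T] by blast
    fix a b assume ab: "a \<in> carrier R" "b \<in> carrier R" "a \<otimes> b \<in> M"
    show "a \<in> M \<or> b \<in> M"
    proof (rule ccontr)
      assume "\<not> (a \<in> M \<or> b \<in> M)"
      then obtain t1 q1 r1 t2 q2 r2
        where 1: "t1 \<in> T" "q1 \<in> M" "r1 \<in> carrier R" "t1 = q1 \<oplus> r1 \<otimes> a"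
          and 2: "t2 \<in> T" "q2 \<in> M" "r2 \<in> carrier R" "t2 = q2 \<oplus> r2 \<otimes> b"
        using meets ab by meson
      have q: "q1 \<in> carrier R" "q2 \<in> carrier R" and t2: "t2 \<in> carrier R"
        using 1 2 ideal.Icarr[OF M(1)] submonoid.mem_carrier[OF T] by auto
      have "t1 \<otimes> t2 = q1 \<otimes> t2 \<oplus> ((r1 \<otimes> a) \<otimes> q2 \<oplus> (r1 \<otimes> r2) \<otimes> (a \<otimes> b))"
        using 1 2 q ab by (simp add: l_distr r_distr m_ac a_ac)
      also have "\<dots> \<in> M"
        using 1 2 ab t2 ideal.I_l_closed[OF M(1)] ideal.I_r_closed[OF M(1)]
          additive_subgroup.a_closed[OF ideal.axioms(1)[OF M(1)]] by simp
      finally show False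
        using M(2) submonoid.m_closed[OF T 1(1) 2(1)] by blast
    qed
  qed
qed

lemma (in cring) exists_primeideal_disjoint:
  assumes I: "ideal I R" and T: "submonoid T R" and disj: "I \<inter> T = {}"
  shows "\<exists>Q. primeideal Q R \<and> I \<subseteq> Q \<and> Q \<inter> T = {}"
proof -
  define F where "F = {J. ideal J R \<and> I \<subseteq> J \<and> J \<inter> T = {}}"
  have "\<exists>M\<in>F. \<forall>J\<in>F. M \<subseteq> J \<longrightarrow> J = M"
  proof (rule subset_Zorn)
    fix C assume C: "subset.chain F C"
    show "\<exists>U\<in>F. \<forall>J\<in>C. J \<subseteq> U"
    proof (cases "C = {}")
      case True
      then show ?thesis using I disj by (auto simp: F_def)
    next
      case False
      have "subset.chain {J. ideal J R} C"
        using C unfolding pred_on.chain_def F_def by auto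
      from chain_Union_is_ideal[OF this] have "ideal (\<Union>C) R"
        using False by simp
      moreover have "I \<subseteq> \<Union>C" "\<Union>C \<inter> T = {}"
        using False C unfolding pred_on.chain_def F_def by blast+
      ultimately show ?thesis
        unfolding F_def by blast
    qed
  qed
  then obtain M where MF: "M \<in> F" and Mmax: "\<And>J. J \<in> F \<Longrightarrow> M \<subseteq> J \<Longrightarrow> J = M"
    by blast
  have M: "ideal M R" "I \<subseteq> M" "M \<inter> T = {}"
    using MF unfolding F_def by auto
  have "primeideal M R"
  proof (rule maximal_disjoint_ideal_is_prime[OF T M(1,3)])
    fix J assume "ideal J R" "M \<subseteq> J" "J \<inter> T = {}"
    then show "J = M"
      using Mmax M(2) unfolding F_def by blast
  qed
  then show ?thesis
    using M by blast
qed

lemma (in cring) exists_primeideal_superset: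
  assumes "ideal I R" "I \<noteq> carrier R"
  shows "\<exists>Q. primeideal Q R \<and> I \<subseteq> Q"
proof -
  have "submonoid {\<one>} R"
    by (rule submonoid.intro) auto
  moreover have "I \<inter> {\<one>} = {}"
    using assms ideal.one_imp_carrier by blast
  ultimately show ?thesis
    using exists_primeideal_disjoint[OF assms(1)] by blast
qed

lemma (in cring) not_maximal_primeideal_imp_larger:
  assumes "primeideal P R" "\<not> maximalideal P R"
  shows "\<exists>Q. primeideal Q R \<and> P \<subset> Q"
proof -
  obtain J where "ideal J R" "P \<subseteq> J" "J \<noteq> P" "J \<noteq> carrier R"
    using maximalidealI[OF primeideal.axioms(1) primeideal.I_notcarr, OF assms(1,1)] assms(2)
    by blast
  then show ?thesis
    using exists_primeideal_superset by blast
qed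

lemma (in primeideal) one_notin: "\<one> \<notin> I"
  using one_imp_carrier I_notcarr by blast

lemma (in maximalideal) primeideal_superset_eq:
  assumes "primeideal J R" "I \<subseteq> J"
  shows "J = I"
proof -
  have J: "ideal J R"
    using primeideal.axioms(1)[OF assms(1)] .
  have "J \<subseteq> carrier R"
    using ideal.Icarr[OF J] by blast
  then have "J = I \<or> J = carrier R"
    by (rule I_maximal[OF J assms(2)])
  then show ?thesis
    using primeideal.I_notcarr[OF assms(1)] by blast
qed

lemma (in primeideal) nat_pow_mem_imp_mem:
  assumes "x \<in> carrier R" "x [^] (n::nat) \<in> I"
  shows "x \<in> I"
  using assms(2)
proof (induction n)
  case 0
  then show ?case using one_notin by simp
next
  case (Suc n)
  then show ?case using I_prime[of "x [^] n" x] assms(1) by auto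
qed

lemma (in primeideal) power_annihilated_imp_mem:
  assumes "t \<in> carrier R" "t \<notin> I" "a \<in> carrier R" "t \<otimes> a [^] (n::nat) = \<zero>"
  shows "a \<in> I"
proof -
  have "t \<otimes> a [^] n \<in> I"
    using assms(4) by simp
  then have "a [^] n \<in> I"
    using I_prime assms(1-3) by blast
  then show ?thesis
    using nat_pow_mem_imp_mem assms(3) by blast
qed

lemma (in cring) submonoid_prime_complement_powers:
  assumes P: "primeideal P R" and a: "a \<in> carrier R"
  shows "submonoid {t \<otimes> a [^] (n::nat) | t n. t \<in> carrier R - P} R"
proof (rule submonoid.intro)
  show "{t \<otimes> a [^] (n::nat) | t n. t \<in> carrier R - P} \<subseteq> carrier R"
    using a by auto
  have "\<one> = \<one> \<otimes> a [^] (0::nat)" "\<one> \<in> carrier R - P"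
    using primeideal.one_notin[OF P] by simp_all
  then show "\<one> \<in> {t \<otimes> a [^] (n::nat) | t n. t \<in> carrier R - P}"
    by blast
  fix x y assume "x \<in> {t \<otimes> a [^] (n::nat) | t n. t \<in> carrier R - P}"
    and "y \<in> {t \<otimes> a [^] (n::nat) | t n. t \<in> carrier R - P}"
  then obtain t t' and n m :: nat
    where t: "t \<in> carrier R - P" "t' \<in> carrier R - P"
      and xy: "x = t \<otimes> a [^] n" "y = t' \<otimes> a [^] m"
    by blast
  have "x \<otimes> y = (t \<otimes> t') \<otimes> a [^] (n + m)"
    using t xy a by (simp add: nat_pow_mult[symmetric] m_ac)
  moreover have "t \<otimes> t' \<in> carrier R - P"
    using t primeideal.I_prime[OF P] by auto
  ultimately show "x \<otimes> y \<in> {t \<otimes> a [^] (n::nat) | t n. t \<in> carrier R - P}"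
    by blast
qed

text \<open>If no such \<open>t\<close> existed, the multiplicative set \<open>(R - P) a\<^sup>\<nat>\<close> would avoid \<open>0\<close>, and a
  prime ideal avoiding it would lie below \<open>P\<close> without containing \<open>a\<close>.\<close>

lemma (in cring) minimal_primeideal_annihilator:
  assumes P: "primeideal P R" and min: "\<And>Q. primeideal Q R \<Longrightarrow> Q \<subseteq> P \<Longrightarrow> Q = P"
    and a: "a \<in> P"
  shows "\<exists>t \<in> carrier R - P. \<exists>n::nat. t \<otimes> a [^] n = \<zero>"
proof (rule ccontr)
  assume none: "\<not> ?thesis"
  have a_carrier: "a \<in> carrier R"
    using a ideal.Icarr[OF primeideal.axioms(1)[OF P]] by blast
  define T where "T = {t \<otimes> a [^] (n::nat) | t n. t \<in> carrier R - P}"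
  have "t = t \<otimes> a [^] (0::nat)" if "t \<in> carrier R" for t
    using that by simp
  then have T_carrier: "carrier R - P \<subseteq> T"
    unfolding T_def by blast
  have "a = \<one> \<otimes> a [^] (1::nat)" "\<one> \<in> carrier R - P"
    using a_carrier primeideal.one_notin[OF P] by simp_all
  then have "a \<in> T"
    unfolding T_def by blast
  have "t \<otimes> a [^] n \<noteq> \<zero>" if "t \<in> carrier R - P" for t and n :: nat
    using none that by blast
  then have "{\<zero>} \<inter> T = {}"
    unfolding T_def by fastforce
  then obtain Q where Q: "primeideal Q R" "Q \<inter> T = {}"
    using exists_primeideal_disjoint[OF zeroideal submonoid_prime_complement_powers[OF P a_carrier]]
    unfolding T_def by blast
  have "Q \<subseteq> P"
    using Q(2) T_carrier ideal.Icarr[OF primeideal.axioms(1)[OF Q(1)]] by blast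
  then show False
    using min[OF Q(1)] Q(2) \<open>a \<in> T\<close> a by blast
qed

lemma (in cring) maximalideal_comaximal:
  assumes P: "maximalideal P R" and f: "f \<in> carrier R" "f \<notin> P"
  shows "\<exists>g\<in>P. \<exists>r\<in>carrier R. g \<oplus> r \<otimes> f = \<one>"
proof -
  note K = ideal_add_cgenideal[OF maximalideal.axioms(1)[OF P] f(1)]
  have "P <+> PIdl f = carrier R"
    using maximalideal.I_maximal[OF P K(1,2)] K(3) f(2) ideal.Icarr[OF K(1)] by blast
  then show ?thesis
    using K(4)[of \<one>] by force
qed

lemma (in cring) flat_eq_zariski_imp_maximalideal:
  assumes eq: "flat_topology R = zariski_topology R" and P: "primeideal P R"
  shows "maximalideal P R"
proof (rule ccontr)
  assume "\<not> maximalideal P R"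
  then obtain Q where Q: "primeideal Q R" "P \<subset> Q"
    using not_maximal_primeideal_imp_larger P by blast
  then obtain f where f: "f \<in> Q" "f \<notin> P"
    by blast
  have f_carrier: "f \<in> carrier R"
    using ideal.Icarr[OF primeideal.axioms(1)[OF Q(1)] f(1)] .
  have V: "Vset R (Idl {f}) = {P' \<in> Spec R. f \<in> P'}"
    using Vset_genideal_singleton[OF f_carrier] by simp
  have "openin (flat_topology R) (Vset R (Idl {f}))"
    using openin_flat_topology_basic fin_gen_ideal_genideal[of "{f}"] f_carrier by simp
  then have "openin (zariski_topology R) (Vset R (Idl {f}))"
    unfolding eq .
  moreover have "Q \<in> Vset R (Idl {f})"
    using V Q(1) f(1) unfolding Spec_def by simp
  moreover have "P \<in> Spec R" "P \<subseteq> Q"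
    using P Q(2) unfolding Spec_def by auto
  ultimately have "P \<in> Vset R (Idl {f})"
    by (rule zariski_open_generalization)
  then show False
    using V f(2) by simp
qed

lemma (in cring) openin_flat_topology_zariski_basic:
  assumes max: "\<And>P. primeideal P R \<Longrightarrow> maximalideal P R" and I: "ideal I R"
  shows "openin (flat_topology R) (Spec R - Vset R I)"
proof (subst openin_subopen, intro ballI)
  fix P assume "P \<in> Spec R - Vset R I"
  then have P: "primeideal P R" "\<not> I \<subseteq> P"
    unfolding Vset_def Spec_def by auto
  then obtain f where f: "f \<in> I" "f \<notin> P"
    by blast
  have f_carrier: "f \<in> carrier R"
    using ideal.Icarr[OF I f(1)] .
  obtain g r where gr: "g \<in> P" "r \<in> carrier R" "g \<oplus> r \<otimes> f = \<one>"
    using maximalideal_comaximal[OF max[OF P(1)] f_carrier f(2)] by blast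
  have g_carrier: "g \<in> carrier R"
    using ideal.Icarr[OF primeideal.axioms(1)[OF P(1)] gr(1)] .
  have V: "Vset R (Idl {g}) = {Q \<in> Spec R. g \<in> Q}"
    using Vset_genideal_singleton[OF g_carrier] by simp
  have "Vset R (Idl {g}) \<subseteq> Spec R - Vset R I"
  proof
    fix Q assume "Q \<in> Vset R (Idl {g})"
    then have Q: "primeideal Q R" "g \<in> Q"
      using V unfolding Spec_def by auto
    interpret Q: primeideal Q R by fact
    have "f \<notin> Q"
    proof
      assume "f \<in> Q"
      then have "g \<oplus> r \<otimes> f \<in> Q"
        using Q(2) gr(2) by (simp add: Q.I_l_closed Q.a_closed)
      then show False
        using gr(3) Q.one_notin by simp
    qed
    then show "Q \<in> Spec R - Vset R I"
      using Q(1) f(1) unfolding Vset_def Spec_def by auto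
  qed
  moreover have "P \<in> Vset R (Idl {g})"
    using V P(1) gr(1) unfolding Spec_def by simp
  moreover have "openin (flat_topology R) (Vset R (Idl {g}))"
    using openin_flat_topology_basic fin_gen_ideal_genideal[of "{g}"] g_carrier by simp
  ultimately show "\<exists>T. openin (flat_topology R) T \<and> P \<in> T \<and> T \<subseteq> Spec R - Vset R I"
    by blast
qed

lemma (in cring) openin_zariski_topology_flat_basic:
  assumes min: "\<And>P Q. primeideal P R \<Longrightarrow> primeideal Q R \<Longrightarrow> Q \<subseteq> P \<Longrightarrow> Q = P"
    and I: "fin_gen_ideal R I"
  shows "openin (zariski_topology R) (Vset R I)"
proof -
  obtain S where S: "finite S" "S \<subseteq> carrier R" "I = Idl S"
    using I unfolding fin_gen_ideal_def by blast
  have V: "Vset R I = {P \<in> Spec R. S \<subseteq> P}"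
    using Vset_genideal[OF S(2)] S(3) by simp
  show ?thesis
  proof (subst openin_subopen, intro ballI)
    fix P assume "P \<in> Vset R I"
    then have P: "primeideal P R" "S \<subseteq> P"
      using V unfolding Spec_def by auto
    have "\<forall>a\<in>S. \<exists>t \<in> carrier R - P. \<exists>n::nat. t \<otimes> a [^] n = \<zero>"
      using minimal_primeideal_annihilator[OF P(1) min[OF P(1)]] P(2) by blast
    then obtain t where t: "\<And>a. a \<in> S \<Longrightarrow> t a \<in> carrier R - P"
      and t_ann: "\<And>a. a \<in> S \<Longrightarrow> \<exists>n::nat. t a \<otimes> a [^] n = \<zero>"
      by metis
    have Vt: "Vset R (Idl {t a}) = {Q \<in> Spec R. t a \<in> Q}" if "a \<in> S" for a
      using Vset_genideal_singleton t[OF that] by simp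
    define W where "W = (\<Inter>a\<in>S. Spec R - Vset R (Idl {t a})) \<inter> topspace (zariski_topology R)"
    have "openin (zariski_topology R) W"
      unfolding W_def using S(1) t
      by (intro openin_INT openin_zariski_topology_basic genideal_ideal) auto
    moreover have "P \<in> W"
      using P(1) t Vt unfolding W_def topspace_zariski_topology Spec_def by auto
    moreover have "W \<subseteq> Vset R I"
    proof
      fix Q assume "Q \<in> W"
      then have "Q \<in> Spec R" "\<And>a. a \<in> S \<Longrightarrow> Q \<notin> Vset R (Idl {t a})"
        unfolding W_def topspace_zariski_topology by blast+
      then have Q: "primeideal Q R" "\<And>a. a \<in> S \<Longrightarrow> t a \<notin> Q"
        using Vt unfolding Spec_def by auto
      have "a \<in> Q" if "a \<in> S" for a
        using primeideal.power_annihilated_imp_mem[OF Q(1)] t_ann t Q(2) S(2) that by blast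
      then show "Q \<in> Vset R I"
        using V Q(1) unfolding Spec_def by auto
    qed
    ultimately show "\<exists>T. openin (zariski_topology R) T \<and> P \<in> T \<and> T \<subseteq> Vset R I"
      by blast
  qed
qed

theorem corollary4p8:
  fixes R :: "('a, 'b) ring_scheme"
  assumes "cring R"
  shows "flat_topology R = zariski_topology R \<longleftrightarrow> (\<forall>P. primeideal P R \<longrightarrow> maximalideal P R)"
proof
  interpret cring R by fact
  show "\<forall>P. primeideal P R \<longrightarrow> maximalideal P R" if "flat_topology R = zariski_topology R"
    using flat_eq_zariski_imp_maximalideal[OF that] by blast
  assume max: "\<forall>P. primeideal P R \<longrightarrow> maximalideal P R"
  then have min: "Q = P" if "primeideal P R" "primeideal Q R" "Q \<subseteq> P" for P Q
    using maximalideal.primeideal_superset_eq that by metis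
  show "flat_topology R = zariski_topology R"
    unfolding flat_topology_def zariski_topology_def
  proof (rule topology_generated_by_eqI)
    show "openin (topology_generated_by {Spec R - Vset R I | I. ideal I R}) s"
      if "s \<in> {Vset R I | I. fin_gen_ideal R I}" for s
      using that openin_zariski_topology_flat_basic[OF min] unfolding zariski_topology_def by blast
    show "openin (topology_generated_by {Vset R I | I. fin_gen_ideal R I}) s"
      if "s \<in> {Spec R - Vset R I | I. ideal I R}" for s
      using that openin_flat_topology_zariski_basic max unfolding flat_topology_def by blast
  qed
qed

end
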